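(* Let $A$ be $K\{X\}_\infty$ or $K\{X\}$ and let $f\in A^{(n)}$ be homogeneous of degree $n\ge1$. (i) If $f$ is primitive, then $\langle f,g_1\sqcup\!\sqcup g_2\rangle=0$ for all homogeneous $g_1,g_2\in A$ of degree $\ge1$. (ii) If $S$ is a monomial of degree $k$ with $1\le k\le n-1$, then $\partial_S(f)=0$ if and only if $\langle f,S\sqcup\!\sqcup g\rangle=0$ for all $g\in A^{(n-k)}$. (iii) If $f$ is orthogonal to all shuffle products $S\sqcup\!\sqcup T$ with $S,T$ monomials of degrees $k$ and $n-k$, $1\le k<\frac{n+1}{2}$, then $f$ is primitive.
   Context: $K$ is a field of characteristic $0$, $X=\{x_1,x_2,\dots\}$ a finite or countable set of variables. A planar rooted tree is reduced if no vertex has exactly one incoming edge. $K\{X\}_\infty$ has basis the monomials: the empty tree $1$ and all planar reduced rooted trees with leaves labelled by elements of $X$, graded by number of leaves ($A^{(n)}$); for $k\ge2$, $\vee^k$ grafts $k$ nonempty trees (in order) onto a new root, extended multilinearly, with unit conventions (arguments $1$ omitted, $\vee^1=\mathrm{id}$, $\vee^k(1,\dots,1)=1$). $K\{X\}$ is the span of $1$ and the binary monomials. $A\otimes A$ carries the operations componentwise, the co-addition $\Delta_a$ is the unique unital homomorphism with $\Delta_a(x_i)=x_i\otimes1+1\otimes x_i$, and $f$ is primitive if $\Delta_a(f)=f\otimes1+1\otimes f$. $\langle\,,\rangle$ is the bilinear form on $A$ making monomials orthonormal, extended factorwise to $A\otimes A$; $\sqcup\!\sqcup$ is defined by $\langle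 g_1\sqcup\!\sqcup g_2,h\rangle=\langle g_1\otimes g_2,\Delta_a(h)\rangle$ for all $h\in A$. For a monomial $T$ of $A$, $\partial_T:A\to A$ is defined by $\Delta_a(f)=\sum_T T\otimes\partial_T(f)$ (sum over monomials of $A$). *)

theory Defs
  imports Main "HOL-Library.Poly_Mapping" "HOL-Library.Countable"
begin

datatype 'x ptree = Leaf 'x | Node "'x ptree list"

text \<open>Monomials: None is the empty tree 1, Some t is a nonempty tree t.\<close>
type_synonym 'x mono = "'x ptree option"

primrec reduced :: "'x ptree \<Rightarrow> bool" where
  "reduced (Leaf x) = True"
| "reduced (Node ts) = (2 \<le> length ts \<and> list_all reduced ts)"

primrec binary :: "'x ptree \<Rightarrow> bool" where
  "binary (Leaf x) = True"
| "binary (Node ts) = (length ts = 2 \<and> list_all binary ts)"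

primrec nleaves :: "'x ptree \<Rightarrow> nat" where
  "nleaves (Leaf x) = 1"
| "nleaves (Node ts) = sum_list (map nleaves ts)"

definition mdeg :: "'x mono \<Rightarrow> nat" where
  "mdeg m = (case m of None \<Rightarrow> 0 | Some t \<Rightarrow> nleaves t)"

text \<open>Monomials of A: bin = False gives K{X}_inf (reduced trees),
  bin = True gives K{X} (binary trees).\<close>
definition Amonos :: "bool \<Rightarrow> 'x mono set" where
  "Amonos bin = {None} \<union> {Some t | t. if bin then binary t else reduced t}"

definition homog :: "bool \<Rightarrow> nat \<Rightarrow> ('x mono \<Rightarrow>\<^sub>0 'k::zero) \<Rightarrow> bool" where
  "homog bin n f = (\<forall>m\<in>Poly_Mapping.keys f. m \<in> Amonos bin \<and> mdeg m = n)"

text \<open>Grafting of monomials with the unit conventions: arguments 1 are omitted,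
  vee^1 = id, vee^k(1,...,1) = 1.\<close>
definition graft :: "'x mono list \<Rightarrow> 'x mono" where
  "graft ms = (case List.map the (filter (\<lambda>m. m \<noteq> None) ms) of
      [] \<Rightarrow> None | [t] \<Rightarrow> Some t | ts \<Rightarrow> Some (Node ts))"

definition smul :: "'k::semiring_0 \<Rightarrow> ('a \<Rightarrow>\<^sub>0 'k) \<Rightarrow> ('a \<Rightarrow>\<^sub>0 'k)" where
  "smul c f = Poly_Mapping.map ((*) c) f"

text \<open>Multilinear expansion of a list of tensors into a linear combination of
  pairs of monomial lists.\<close>
primrec expand :: "(('x mono \<times> 'x mono) \<Rightarrow>\<^sub>0 'k::comm_semiring_1) list
      \<Rightarrow> ('x mono list \<times> 'x mono list) \<Rightarrow>\<^sub>0 'k" where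
  "expand [] = Poly_Mapping.single ([], []) 1"
| "expand (f # fs) = (\<Sum>p\<in>Poly_Mapping.keys f. \<Sum>q\<in>Poly_Mapping.keys (expand fs).
      Poly_Mapping.single (fst p # fst q, snd p # snd q) (Poly_Mapping.lookup f p * Poly_Mapping.lookup (expand fs) q))"

definition graft_tensor :: "(('x mono \<times> 'x mono) \<Rightarrow>\<^sub>0 'k::comm_semiring_1) list
      \<Rightarrow> ('x mono \<times> 'x mono) \<Rightarrow>\<^sub>0 'k" where
  "graft_tensor fs = (\<Sum>q\<in>Poly_Mapping.keys (expand fs).
      Poly_Mapping.single (graft (fst q), graft (snd q)) (Poly_Mapping.lookup (expand fs) q))"

text \<open>Co-addition on nonempty trees: the unital homomorphism with
  Delta(x) = x (x) 1 + 1 (x) x.\<close>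
primrec delta :: "'x ptree \<Rightarrow> ('x mono \<times> 'x mono) \<Rightarrow>\<^sub>0 'k::comm_semiring_1" where
  "delta (Leaf x) = Poly_Mapping.single (Some (Leaf x), None) 1
                   + Poly_Mapping.single (None, Some (Leaf x)) 1"
| "delta (Node ts) = graft_tensor (List.map delta ts)"

definition delta_mono :: "'x mono \<Rightarrow> ('x mono \<times> 'x mono) \<Rightarrow>\<^sub>0 'k::comm_semiring_1" where
  "delta_mono m = (case m of None \<Rightarrow> Poly_Mapping.single (None, None) 1 | Some t \<Rightarrow> delta t)"

definition Delta :: "('x mono \<Rightarrow>\<^sub>0 'k::comm_semiring_1) \<Rightarrow> ('x mono \<times> 'x mono) \<Rightarrow>\<^sub>0 'k" where
  "Delta f = (\<Sum>m\<in>Poly_Mapping.keys f. smul (Poly_Mapping.lookup f m) (delta_mono m))"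

definition tensor :: "('a \<Rightarrow>\<^sub>0 'k::comm_semiring_1) \<Rightarrow> ('a \<Rightarrow>\<^sub>0 'k) \<Rightarrow> ('a \<times> 'a) \<Rightarrow>\<^sub>0 'k" where
  "tensor g h = (\<Sum>p\<in>Poly_Mapping.keys g. \<Sum>q\<in>Poly_Mapping.keys h. Poly_Mapping.single (p, q) (Poly_Mapping.lookup g p * Poly_Mapping.lookup h q))"

abbreviation one_el :: "'x mono \<Rightarrow>\<^sub>0 'k::comm_semiring_1" where
  "one_el \<equiv> Poly_Mapping.single None 1"

definition primitive :: "('x mono \<Rightarrow>\<^sub>0 'k::comm_semiring_1) \<Rightarrow> bool" where
  "primitive f = (Delta f = tensor f one_el + tensor one_el f)"

definition pairing :: "('a \<Rightarrow>\<^sub>0 'k::comm_semiring_1) \<Rightarrow> ('a \<Rightarrow>\<^sub>0 'k) \<Rightarrow> 'k" where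
  "pairing f g = (\<Sum>m\<in>Poly_Mapping.keys f. Poly_Mapping.lookup f m * Poly_Mapping.lookup g m)"

definition shuffle :: "bool \<Rightarrow> ('x mono \<Rightarrow>\<^sub>0 'k::comm_semiring_1) \<Rightarrow> ('x mono \<Rightarrow>\<^sub>0 'k)
      \<Rightarrow> 'x mono \<Rightarrow>\<^sub>0 'k" where
  "shuffle bin g1 g2 = Abs_poly_mapping (\<lambda>h. if h \<in> Amonos bin
      then pairing (tensor g1 g2) (Delta (Poly_Mapping.single h 1)) else 0)"

definition dpartial :: "'x mono \<Rightarrow> ('x mono \<Rightarrow>\<^sub>0 'k::comm_semiring_1) \<Rightarrow> 'x mono \<Rightarrow>\<^sub>0 'k" where
  "dpartial T f = Abs_poly_mapping (\<lambda>U. Poly_Mapping.lookup (Delta f) (T, U))"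

end

(* Everything rests on the adjunction <f, g1 shuffle g2> = <Delta_a f, g1 (x) g2>.  It needs the
   shuffle product to be finitely supported, which holds because Delta_a t only involves pairs of
   monomials whose degrees add up to that of t and whose labels cover those of t, and only finitely
   many reduced trees have a given number of leaves and labels from a given finite set.
   Then (i) holds because primitivity means that Delta_a f has no component T (x) U with T and U
   both nonempty, and both sides of (ii) say that the S-row of Delta_a f vanishes.  For (iii),
   Delta_a is counital, so the components with an empty factor are those of f (x) 1 + 1 (x) f, and
   cocommutative, so every other component is the mirror image of one with deg S <= deg T. *)

theory Submission
  imports Defs
begin

lemma lookup_smul [simp]: "Poly_Mapping.lookup (smul c f) k = c * Poly_Mapping.lookup f k"
  unfolding smul_def by (simp add: Poly_Mapping.map.rep_eq when_def)

lemma lookup_Delta: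
  "Poly_Mapping.lookup (Delta f) p =
     (\<Sum>m\<in>Poly_Mapping.keys f. Poly_Mapping.lookup f m * Poly_Mapping.lookup (delta_mono m) p)"
  unfolding Delta_def by (simp add: lookup_sum)

lemma Delta_single_1: "Delta (Poly_Mapping.single m (1::'k::comm_semiring_1)) = delta_mono m"
  by (rule poly_mapping_eqI) (simp add: lookup_Delta)

lemma lookup_double_sum_single:
  assumes "finite A" "finite B" "\<And>a b. k a b = k0 \<longleftrightarrow> a = a0 \<and> b = b0"
  shows "Poly_Mapping.lookup (\<Sum>a\<in>A. \<Sum>b\<in>B. Poly_Mapping.single (k a b) (c a b)) k0 =
    (if a0 \<in> A \<and> b0 \<in> B then c a0 b0 else 0)"
proof -
  have "Poly_Mapping.lookup (\<Sum>a\<in>A. \<Sum>b\<in>B. Poly_Mapping.single (k a b) (c a b)) k0 =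
      (\<Sum>a\<in>A. if a = a0 then (\<Sum>b\<in>B. if b = b0 then c a b else 0) else 0)"
    unfolding lookup_sum lookup_single when_def using assms(3)
    by (intro sum.cong refl) (auto intro: sum.neutral)
  then show ?thesis using assms(1,2) by (simp add: sum.delta)
qed

lemma lookup_tensor:
  "Poly_Mapping.lookup (tensor g h) (p, q) = Poly_Mapping.lookup g p * Poly_Mapping.lookup h q"
  unfolding tensor_def by (subst lookup_double_sum_single) (auto simp: in_keys_iff)

lemma keys_tensor_subset: "Poly_Mapping.keys (tensor g h) \<subseteq> Poly_Mapping.keys g \<times> Poly_Mapping.keys h"
  by (auto simp: in_keys_iff lookup_tensor)

lemma pairing_mono_neutral:
  assumes "finite A" "Poly_Mapping.keys f \<subseteq> A"
  shows "pairing f g = (\<Sum>m\<in>A. Poly_Mapping.lookup f m * Poly_Mapping.lookup g m)"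
  unfolding pairing_def using assms
  by (intro sum.mono_neutral_left) (auto simp: in_keys_iff)

lemma pairing_tensor:
  "pairing (tensor g1 g2) X =
    (\<Sum>p\<in>Poly_Mapping.keys g1. \<Sum>q\<in>Poly_Mapping.keys g2.
       Poly_Mapping.lookup g1 p * Poly_Mapping.lookup g2 q * Poly_Mapping.lookup X (p, q))"
  by (subst pairing_mono_neutral[OF _ keys_tensor_subset])
    (auto simp: sum.cartesian_product lookup_tensor intro!: sum.cong)

lemma lookup_expand:
  "Poly_Mapping.lookup (expand fs) (as, bs) =
    (if length as = length fs \<and> length bs = length fs
     then \<Prod>i<length fs. Poly_Mapping.lookup (fs ! i) (as ! i, bs ! i) else 0)"
proof (induction fs arbitrary: as bs)
  case Nil
  then show ?case by (simp add: lookup_single when_def)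
next
  case (Cons f fs)
  show ?case
  proof (cases "as = [] \<or> bs = []")
    case True
    then show ?thesis by (auto simp: lookup_sum lookup_single when_def)
  next
    case False
    then obtain a as' b bs' where ab: "as = a # as'" "bs = b # bs'"
      by (cases as; cases bs) auto
    have "Poly_Mapping.lookup (expand (f # fs)) (as, bs) =
        (if (a, b) \<in> Poly_Mapping.keys f \<and> (as', bs') \<in> Poly_Mapping.keys (expand fs)
         then Poly_Mapping.lookup f (a, b) * Poly_Mapping.lookup (expand fs) (as', bs') else 0)"
      unfolding expand.simps ab by (rule lookup_double_sum_single) auto
    also have "\<dots> = Poly_Mapping.lookup f (a, b) * Poly_Mapping.lookup (expand fs) (as', bs')"
      by (auto simp: in_keys_iff)
    finally show ?thesis
      using Cons.IH by (simp add: ab prod.lessThan_Suc_shift del: prod.lessThan_Suc)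
  qed
qed

lemma keys_expandD:
  assumes "(as, bs) \<in> Poly_Mapping.keys (expand fs)"
  shows "length as = length fs" "length bs = length fs"
    and "\<And>i. i < length fs \<Longrightarrow> (as ! i, bs ! i) \<in> Poly_Mapping.keys (fs ! i)"
  using assms by (auto simp: in_keys_iff lookup_expand split: if_splits)
    (meson finite_lessThan lessThan_iff prod_zero)

lemma lookup_graft_tensor:
  "Poly_Mapping.lookup (graft_tensor fs) (a, b) =
    (\<Sum>q\<in>{q\<in>Poly_Mapping.keys (expand fs). graft (fst q) = a \<and> graft (snd q) = b}.
       Poly_Mapping.lookup (expand fs) q)"
  unfolding graft_tensor_def lookup_sum lookup_single when_def
  by (simp add: sum.inter_filter[symmetric] if_distrib cong: if_cong)

definition node :: "'x ptree list \<Rightarrow> 'x mono" where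
  "node ts = (case ts of [] \<Rightarrow> None | [t] \<Rightarrow> Some t | us \<Rightarrow> Some (Node us))"

lemma node_cases:
  "ts = [] \<and> node ts = None \<or> (\<exists>t. ts = [t] \<and> node ts = Some t) \<or> 2 \<le> length ts \<and> node ts = Some (Node ts)"
  unfolding node_def by (cases ts rule: remdups_adj.cases) auto

lemma graft_eq_node: "graft ms = node (List.map the (filter (\<lambda>m. m \<noteq> None) ms))"
  unfolding graft_def node_def ..

primrec labels :: "'x ptree \<Rightarrow> 'x set" where
  "labels (Leaf x) = {x}"
| "labels (Node ts) = \<Union> (set (List.map labels ts))"

definition mlabels :: "'x mono \<Rightarrow> 'x set" where
  "mlabels m = (case m of None \<Rightarrow> {} | Some t \<Rightarrow> labels t)"

lemma mdeg_node: "mdeg (node ts) = sum_list (List.map nleaves ts)"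
  using node_cases[of ts] by (auto simp: mdeg_def)

lemma mlabels_node: "mlabels (node ts) = \<Union> (set (List.map labels ts))"
  using node_cases[of ts] by (auto simp: mlabels_def)

lemma mdeg_graft: "mdeg (graft ms) = sum_list (List.map mdeg ms)"
proof -
  have "mdeg (graft ms) = sum_list (List.map nleaves (List.map the (filter (\<lambda>m. m \<noteq> None) ms)))"
    unfolding graft_eq_node by (simp add: mdeg_node)
  also have "\<dots> = sum_list (List.map mdeg ms)"
    by (induction ms) (auto simp: mdeg_def)
  finally show ?thesis .
qed

lemma mlabels_graft: "mlabels (graft ms) = \<Union> (set (List.map mlabels ms))"
proof -
  have "mlabels (graft ms) = \<Union> (set (List.map labels (List.map the (filter (\<lambda>m. m \<noteq> None) ms))))"
    unfolding graft_eq_node by (simp add: mlabels_node)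
  also have "\<dots> = \<Union> (set (List.map mlabels ms))"
    by (induction ms) (auto simp: mlabels_def)
  finally show ?thesis .
qed

lemma graft_eq_None_iff: "graft ms = None \<longleftrightarrow> (\<forall>m\<in>set ms. m = None)"
proof -
  have "List.map the (filter (\<lambda>m. m \<noteq> None) ms) = [] \<longleftrightarrow> (\<forall>m\<in>set ms. m = None)"
    by (auto simp: filter_empty_conv)
  then show ?thesis
    using node_cases[of "List.map the (filter (\<lambda>m. m \<noteq> None) ms)"] unfolding graft_eq_node by auto
qed

lemma graft_map_Some: "2 \<le> length ts \<Longrightarrow> graft (List.map Some ts) = Some (Node ts)"
  unfolding graft_eq_node using node_cases[of ts] by (auto simp: comp_def)

lemma binary_imp_reduced: "binary t \<Longrightarrow> reduced t"
  by (induction t) (auto simp: list_all_iff)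

lemma None_in_Amonos [simp]: "None \<in> Amonos bin"
  by (simp add: Amonos_def)

lemma Some_in_Amonos_iff: "Some t \<in> Amonos bin \<longleftrightarrow> (if bin then binary t else reduced t)"
  by (simp add: Amonos_def)

lemma Amonos_reduced: "Some t \<in> Amonos bin \<Longrightarrow> reduced t"
  by (cases bin) (auto simp: Some_in_Amonos_iff intro: binary_imp_reduced)

lemma graft_in_Amonos:
  assumes "set ms \<subseteq> Amonos bin" and "bin \<Longrightarrow> length ms = 2"
  shows "graft ms \<in> Amonos bin"
proof -
  define ts where "ts = List.map the (filter (\<lambda>m. m \<noteq> None) ms)"
  have ts: "\<forall>t\<in>set ts. if bin then binary t else reduced t"
    using assms(1) unfolding ts_def by (auto simp flip: Some_in_Amonos_iff)
  have "length ts \<le> length ms" unfolding ts_def by simp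
  then have "node ts \<in> Amonos bin"
    using node_cases[of ts] ts assms(2) by (cases bin) (auto simp: Some_in_Amonos_iff list_all_iff)
  then show ?thesis unfolding graft_eq_node ts_def .
qed

lemma keys_delta_NodeE:
  assumes "(a, b) \<in> Poly_Mapping.keys (delta (Node ts) :: _ \<Rightarrow>\<^sub>0 'k::comm_semiring_1)"
  obtains as bs where "(as, bs) \<in> Poly_Mapping.keys (expand (List.map delta ts) :: _ \<Rightarrow>\<^sub>0 'k)"
    and "graft as = a" and "graft bs = b"
proof -
  have "Poly_Mapping.lookup (delta (Node ts) :: _ \<Rightarrow>\<^sub>0 'k) (a, b) \<noteq> 0"
    using assms by (simp add: in_keys_iff)
  then obtain q where "q \<in> Poly_Mapping.keys (expand (List.map delta ts) :: _ \<Rightarrow>\<^sub>0 'k)"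
    and "graft (fst q) = a" and "graft (snd q) = b"
    unfolding delta.simps lookup_graft_tensor
    using sum.not_neutral_contains_not_neutral by blast
  then show ?thesis using that by (cases q) auto
qed

lemma Some_Node_in_Amonos_child:
  "Some (Node ts) \<in> Amonos bin \<Longrightarrow> t \<in> set ts \<Longrightarrow> Some t \<in> Amonos bin"
  by (cases bin) (auto simp: Some_in_Amonos_iff list_all_iff)

lemma Union_set_map_conv_nth: "\<Union> (set (List.map g xs)) = (\<Union>i<length xs. g (xs ! i))"
  by (auto simp: in_set_conv_nth intro!: bexI[OF _ nth_mem])

lemma keys_delta:
  assumes "Some t \<in> Amonos bin" and "(a, b) \<in> Poly_Mapping.keys (delta t :: _ \<Rightarrow>\<^sub>0 'k::comm_semiring_1)"
  shows "a \<in> Amonos bin \<and> b \<in> Amonos bin \<and> mdeg a + mdeg b = nleaves t \<and> mlabels a \<union> mlabels b = labels t"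
  using assms
proof (induction t arbitrary: a b)
  case (Leaf x)
  then show ?case
    by (auto simp: in_keys_iff lookup_add lookup_single when_def mdeg_def mlabels_def Some_in_Amonos_iff
        split: if_splits)
next
  case (Node ts)
  obtain as bs where q: "(as, bs) \<in> Poly_Mapping.keys (expand (List.map delta ts) :: _ \<Rightarrow>\<^sub>0 'k)"
    and a: "graft as = a" and b: "graft bs = b"
    using Node.prems(2) by (rule keys_delta_NodeE)
  have len: "length as = length ts" "length bs = length ts"
    using keys_expandD(1,2)[OF q] by auto
  have IH: "as ! i \<in> Amonos bin \<and> bs ! i \<in> Amonos bin \<and> mdeg (as ! i) + mdeg (bs ! i) = nleaves (ts ! i)
      \<and> mlabels (as ! i) \<union> mlabels (bs ! i) = labels (ts ! i)" if i: "i < length ts" for i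
  proof (rule Node.IH)
    show "ts ! i \<in> set ts" using i by simp
    then show "Some (ts ! i) \<in> Amonos bin"
      by (rule Some_Node_in_Amonos_child[OF Node.prems(1)])
    show "(as ! i, bs ! i) \<in> Poly_Mapping.keys (delta (ts ! i) :: _ \<Rightarrow>\<^sub>0 'k)"
      using keys_expandD(3)[OF q] i by simp
  qed
  have binlen: "bin \<Longrightarrow> length ts = 2" using Node.prems(1) by (auto simp: Some_in_Amonos_iff)
  have "a \<in> Amonos bin" "b \<in> Amonos bin"
    unfolding a[symmetric] b[symmetric] using IH len binlen
    by (auto intro!: graft_in_Amonos simp: in_set_conv_nth)
  moreover have "mdeg a + mdeg b = nleaves (Node ts)"
    unfolding a[symmetric] b[symmetric] mdeg_graft
    using IH len by (simp add: sum_list_sum_nth atLeast0LessThan sum.distrib[symmetric])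
  moreover have "mlabels a \<union> mlabels b = labels (Node ts)"
    unfolding a[symmetric] b[symmetric] mlabels_graft labels.simps Union_set_map_conv_nth
    using IH len by (simp add: UN_Un_distrib[symmetric])
  ultimately show ?case by blast
qed

lemma lookup_delta_swap:
  "Poly_Mapping.lookup (delta t :: _ \<Rightarrow>\<^sub>0 'k::comm_semiring_1) (a, b) = Poly_Mapping.lookup (delta t) (b, a)"
proof (induction t arbitrary: a b)
  case (Leaf x)
  then show ?case by (auto simp: lookup_add lookup_single when_def)
next
  case (Node ts)
  let ?E = "expand (List.map delta ts) :: _ \<Rightarrow>\<^sub>0 'k"
  have "Poly_Mapping.lookup ?E (bs, as) = Poly_Mapping.lookup ?E (as, bs)" for as bs
    using Node.IH by (auto simp: lookup_expand intro!: prod.cong)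
  then show ?case unfolding delta.simps lookup_graft_tensor
    by (intro sum.reindex_bij_witness[of _ prod.swap prod.swap]) (auto simp: in_keys_iff)
qed

lemma lookup_delta_counit:
  "reduced t \<Longrightarrow> Poly_Mapping.lookup (delta t :: _ \<Rightarrow>\<^sub>0 'k::comm_semiring_1) (a, None) = (if a = Some t then 1 else 0)"
proof (induction t arbitrary: a)
  case (Leaf x)
  then show ?case by (auto simp: lookup_add lookup_single when_def)
next
  case (Node ts)
  let ?E = "expand (List.map delta ts) :: _ \<Rightarrow>\<^sub>0 'k"
  let ?q0 = "(List.map Some ts, replicate (length ts) (None :: 'a mono))"
  have E: "Poly_Mapping.lookup ?E q = (if q = ?q0 then 1 else 0)" if "graft (snd q) = None" for q
  proof (cases q)
    case (Pair as bs)
    have bs: "bs = replicate (length ts) None \<longleftrightarrow> length bs = length ts"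
      using that Pair by (auto simp: graft_eq_None_iff intro: replicate_eqI)
    have IH: "Poly_Mapping.lookup (delta (ts ! i) :: _ \<Rightarrow>\<^sub>0 'k) (as ! i, bs ! i) =
        (if as ! i = Some (ts ! i) then 1 else 0)" if "i < length ts" "length bs = length ts" for i
      using Node that bs by (auto simp: list_all_iff)
    show ?thesis
    proof (cases "length as = length ts \<and> length bs = length ts \<and> (\<forall>i<length ts. as ! i = Some (ts ! i))")
      case True
      then have "as = List.map Some ts" by (simp add: list_eq_iff_nth_eq)
      then show ?thesis using True IH bs Pair by (simp add: lookup_expand)
    next
      case False
      then have "q \<noteq> ?q0" using Pair by auto
      then show ?thesis using False IH Pair by (auto simp: lookup_expand intro!: prod_zero)
    qed
  qed
  have "Poly_Mapping.lookup (delta (Node ts) :: _ \<Rightarrow>\<^sub>0 'k) (a, None) =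
      (\<Sum>q\<in>{q\<in>Poly_Mapping.keys ?E. graft (fst q) = a \<and> graft (snd q) = None}. if q = ?q0 then 1 else 0)"
    unfolding delta.simps lookup_graft_tensor using E by (intro sum.cong) auto
  also have "\<dots> = (if a = Some (Node ts) then 1 else 0)"
    using E[of ?q0] graft_map_Some[of ts] Node.prems
    by (auto simp: in_keys_iff graft_eq_None_iff)
  finally show ?case .
qed

lemma nleaves_pos: "reduced t \<Longrightarrow> 1 \<le> nleaves t"
proof (induction t)
  case (Leaf x)
  then show ?case by simp
next
  case (Node ts)
  then obtain c where c: "c \<in> set ts" by (cases ts) auto
  then have "1 \<le> nleaves c" using Node by (auto simp: list_all_iff)
  also have "\<dots> \<le> nleaves (Node ts)" using c by (simp add: member_le_sum_list)
  finally show ?case .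
qed

lemma nleaves_child_less:
  assumes "reduced (Node ts)" and "c \<in> set ts"
  shows "nleaves c < nleaves (Node ts)"
proof -
  obtain d where d: "d \<in> set (remove1 c ts)"
    using assms by (cases "remove1 c ts") (auto simp: length_remove1 dest: arg_cong[of _ _ length])
  then have "d \<in> set ts" using set_remove1_subset by fast
  then have "1 \<le> nleaves d"
    using assms(1) nleaves_pos by (auto simp: list_all_iff)
  also have "\<dots> \<le> sum_list (List.map nleaves (remove1 c ts))"
    using d by (simp add: member_le_sum_list)
  finally show ?thesis using sum_list_map_remove1[OF assms(2), of nleaves] by simp
qed

lemma length_le_nleaves: "reduced (Node ts) \<Longrightarrow> length ts \<le> nleaves (Node ts)"
  using sum_list_mono[of ts "\<lambda>_. 1" nleaves] nleaves_pos
  by (auto simp: list_all_iff sum_list_triv)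

lemma finite_reduced_trees:
  assumes "finite L"
  shows "finite {t. reduced t \<and> nleaves t \<le> N \<and> labels t \<subseteq> L}"
proof (induction N)
  case 0
  have "{t. reduced t \<and> nleaves t \<le> 0 \<and> labels t \<subseteq> L} = {}"
    by (auto dest: nleaves_pos)
  then show ?case by (simp only: finite.emptyI)
next
  case (Suc N)
  let ?R = "{t. reduced t \<and> nleaves t \<le> N \<and> labels t \<subseteq> L}"
  have "{t. reduced t \<and> nleaves t \<le> Suc N \<and> labels t \<subseteq> L} \<subseteq>
      Leaf ` L \<union> Node ` {ts. set ts \<subseteq> ?R \<and> length ts \<le> Suc N}"
  proof
    fix t assume t: "t \<in> {t. reduced t \<and> nleaves t \<le> Suc N \<and> labels t \<subseteq> L}"
    show "t \<in> Leaf ` L \<union> Node ` {ts. set ts \<subseteq> ?R \<and> length ts \<le> Suc N}"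
    proof (cases t)
      case (Leaf x)
      then show ?thesis using t by auto
    next
      case (Node ts)
      have "set ts \<subseteq> ?R"
        using t nleaves_child_less[of ts] by (fastforce simp: Node list_all_iff)
      moreover have "length ts \<le> Suc N" using length_le_nleaves[of ts] t Node by auto
      ultimately show ?thesis using Node by auto
    qed
  qed
  moreover have "finite (Leaf ` L \<union> Node ` {ts. set ts \<subseteq> ?R \<and> length ts \<le> Suc N})"
    using Suc assms by (intro finite_UnI finite_imageI finite_lists_length_le)
  ultimately show ?case by (rule finite_subset)
qed

lemma finite_labels: "finite (labels t)"
  by (induction t) auto

lemma finite_mlabels: "finite (mlabels m)"
  by (auto simp: mlabels_def finite_labels split: option.splits)

lemma finite_delta_support:
  "finite {t. Some t \<in> Amonos bin \<and> (p, q) \<in> Poly_Mapping.keys (delta t :: _ \<Rightarrow>\<^sub>0 'k::comm_semiring_1)}"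
proof (rule finite_subset)
  show "{t. Some t \<in> Amonos bin \<and> (p, q) \<in> Poly_Mapping.keys (delta t :: _ \<Rightarrow>\<^sub>0 'k)} \<subseteq>
      {t. reduced t \<and> nleaves t \<le> mdeg p + mdeg q \<and> labels t \<subseteq> mlabels p \<union> mlabels q}"
  proof
    fix t assume "t \<in> {t. Some t \<in> Amonos bin \<and> (p, q) \<in> Poly_Mapping.keys (delta t :: _ \<Rightarrow>\<^sub>0 'k)}"
    then have "reduced t" and "mdeg p + mdeg q = nleaves t \<and> mlabels p \<union> mlabels q = labels t"
      using keys_delta Amonos_reduced by blast+
    then show "t \<in> {t. reduced t \<and> nleaves t \<le> mdeg p + mdeg q \<and> labels t \<subseteq> mlabels p \<union> mlabels q}"
      by auto
  qed
  show "finite {t. reduced t \<and> nleaves t \<le> mdeg p + mdeg q \<and> labels t \<subseteq> mlabels p \<union> mlabels q}"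
    by (intro finite_reduced_trees) (simp add: finite_mlabels)
qed

lemma lookup_shuffle:
  fixes g1 g2 :: "'x mono \<Rightarrow>\<^sub>0 'k::comm_semiring_1"
  shows "Poly_Mapping.lookup (shuffle bin g1 g2) h =
    (if h \<in> Amonos bin then
       \<Sum>p\<in>Poly_Mapping.keys g1. \<Sum>q\<in>Poly_Mapping.keys g2.
         Poly_Mapping.lookup g1 p * Poly_Mapping.lookup g2 q * Poly_Mapping.lookup (delta_mono h) (p, q)
     else 0)"
proof -
  define F where "F h = (if h \<in> Amonos bin then
       \<Sum>p\<in>Poly_Mapping.keys g1. \<Sum>q\<in>Poly_Mapping.keys g2.
         Poly_Mapping.lookup g1 p * Poly_Mapping.lookup g2 q * Poly_Mapping.lookup (delta_mono h :: _ \<Rightarrow>\<^sub>0 'k) (p, q)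
     else 0)" for h
  have "{h. F h \<noteq> 0} \<subseteq> insert None (Some ` (\<Union>p\<in>Poly_Mapping.keys g1. \<Union>q\<in>Poly_Mapping.keys g2.
      {t. Some t \<in> Amonos bin \<and> (p, q) \<in> Poly_Mapping.keys (delta t :: _ \<Rightarrow>\<^sub>0 'k)}))"
  proof
    fix h assume "h \<in> {h. F h \<noteq> 0}"
    then have "h \<in> Amonos bin" and "(\<Sum>p\<in>Poly_Mapping.keys g1. \<Sum>q\<in>Poly_Mapping.keys g2.
         Poly_Mapping.lookup g1 p * Poly_Mapping.lookup g2 q * Poly_Mapping.lookup (delta_mono h :: _ \<Rightarrow>\<^sub>0 'k) (p, q)) \<noteq> 0"
      unfolding F_def by (auto split: if_splits)
    then obtain p where "h \<in> Amonos bin" "p \<in> Poly_Mapping.keys g1" and "(\<Sum>q\<in>Poly_Mapping.keys g2.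
         Poly_Mapping.lookup g1 p * Poly_Mapping.lookup g2 q * Poly_Mapping.lookup (delta_mono h :: _ \<Rightarrow>\<^sub>0 'k) (p, q)) \<noteq> 0"
      using sum.not_neutral_contains_not_neutral by blast
    then obtain q where "h \<in> Amonos bin" "p \<in> Poly_Mapping.keys g1" "q \<in> Poly_Mapping.keys g2"
      and "Poly_Mapping.lookup g1 p * Poly_Mapping.lookup g2 q * Poly_Mapping.lookup (delta_mono h :: _ \<Rightarrow>\<^sub>0 'k) (p, q) \<noteq> 0"
      using sum.not_neutral_contains_not_neutral by blast
    moreover from this(4) have "(p, q) \<in> Poly_Mapping.keys (delta_mono h :: _ \<Rightarrow>\<^sub>0 'k)"
      by (auto simp: in_keys_iff)
    ultimately show "h \<in> insert None (Some ` (\<Union>p\<in>Poly_Mapping.keys g1. \<Union>q\<in>Poly_Mapping.keys g2.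
        {t. Some t \<in> Amonos bin \<and> (p, q) \<in> Poly_Mapping.keys (delta t :: _ \<Rightarrow>\<^sub>0 'k)}))"
      by (cases h) (auto simp: delta_mono_def)
  qed
  then have "finite {h. F h \<noteq> 0}"
    by (rule finite_subset) (simp add: finite_delta_support)
  moreover have "shuffle bin g1 g2 = Abs_poly_mapping F"
    unfolding shuffle_def F_def Delta_single_1 pairing_tensor ..
  ultimately show ?thesis by (simp add: F_def)
qed

lemma pairing_shuffle:
  fixes f g1 g2 :: "'x mono \<Rightarrow>\<^sub>0 'k::comm_semiring_1"
  assumes "Poly_Mapping.keys f \<subseteq> Amonos bin"
  shows "pairing f (shuffle bin g1 g2) =
    (\<Sum>p\<in>Poly_Mapping.keys g1. \<Sum>q\<in>Poly_Mapping.keys g2.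
       Poly_Mapping.lookup g1 p * Poly_Mapping.lookup g2 q * Poly_Mapping.lookup (Delta f) (p, q))"
proof -
  have "pairing f (shuffle bin g1 g2) =
      (\<Sum>h\<in>Poly_Mapping.keys f. \<Sum>p\<in>Poly_Mapping.keys g1. \<Sum>q\<in>Poly_Mapping.keys g2.
         Poly_Mapping.lookup f h * (Poly_Mapping.lookup g1 p * Poly_Mapping.lookup g2 q *
           Poly_Mapping.lookup (delta_mono h) (p, q)))"
    unfolding pairing_def lookup_shuffle using assms by (intro sum.cong) (auto simp: sum_distrib_left)
  also have "\<dots> = (\<Sum>p\<in>Poly_Mapping.keys g1. \<Sum>q\<in>Poly_Mapping.keys g2. \<Sum>h\<in>Poly_Mapping.keys f.
         Poly_Mapping.lookup f h * (Poly_Mapping.lookup g1 p * Poly_Mapping.lookup g2 q *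
           Poly_Mapping.lookup (delta_mono h) (p, q)))"
    by (subst sum.swap) (simp only: sum.swap[where A = "Poly_Mapping.keys f"])
  also have "\<dots> = (\<Sum>p\<in>Poly_Mapping.keys g1. \<Sum>q\<in>Poly_Mapping.keys g2.
       Poly_Mapping.lookup g1 p * Poly_Mapping.lookup g2 q * Poly_Mapping.lookup (Delta f) (p, q))"
    unfolding lookup_Delta sum_distrib_left by (intro sum.cong refl) (simp add: mult_ac)
  finally show ?thesis .
qed

lemma pairing_shuffle_single:
  "Poly_Mapping.keys f \<subseteq> Amonos bin \<Longrightarrow>
    pairing f (shuffle bin (Poly_Mapping.single S 1) (Poly_Mapping.single T 1)) = Poly_Mapping.lookup (Delta f) (S, T)"
  by (simp add: pairing_shuffle)

lemma lookup_dpartial: "Poly_Mapping.lookup (dpartial S f) U = Poly_Mapping.lookup (Delta f) (S, U)"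
proof -
  have "{U. Poly_Mapping.lookup (Delta f) (S, U) \<noteq> 0} \<subseteq> snd ` Poly_Mapping.keys (Delta f)"
    by (force simp: in_keys_iff)
  then have "finite {U. Poly_Mapping.lookup (Delta f) (S, U) \<noteq> 0}"
    by (rule finite_subset) simp
  then show ?thesis unfolding dpartial_def by simp
qed

lemma lookup_Delta_swap: "Poly_Mapping.lookup (Delta f) (a, b) = Poly_Mapping.lookup (Delta f) (b, a)"
  unfolding lookup_Delta delta_mono_def
  by (intro sum.cong refl) (auto simp: lookup_single when_def lookup_delta_swap[of _ a b] split: option.split)

lemma lookup_Delta_counit:
  assumes "Poly_Mapping.keys f \<subseteq> Amonos bin"
  shows "Poly_Mapping.lookup (Delta f) (a, None) = Poly_Mapping.lookup f a"
proof -
  have counit: "Poly_Mapping.lookup (delta_mono m) (a, None) = (if m = a then 1 else 0)"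
    if "m \<in> Amonos bin" for m
    using that by (cases m) (auto simp: delta_mono_def lookup_single lookup_delta_counit dest: Amonos_reduced)
  have "Poly_Mapping.lookup (Delta f) (a, None) =
      (\<Sum>m\<in>Poly_Mapping.keys f. if m = a then Poly_Mapping.lookup f m else 0)"
    unfolding lookup_Delta using assms by (intro sum.cong refl) (auto simp: counit)
  then show ?thesis by (simp add: in_keys_iff)
qed

lemma keys_Delta_homog:
  fixes f :: "'x mono \<Rightarrow>\<^sub>0 'k::comm_semiring_1"
  assumes "homog bin n f" and "(a, b) \<in> Poly_Mapping.keys (Delta f)"
  shows "a \<in> Amonos bin \<and> b \<in> Amonos bin \<and> mdeg a + mdeg b = n"
proof -
  obtain m where m: "m \<in> Poly_Mapping.keys f"
    and "Poly_Mapping.lookup f m * Poly_Mapping.lookup (delta_mono m) (a, b) \<noteq> 0"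
    using assms(2) sum.not_neutral_contains_not_neutral unfolding in_keys_iff lookup_Delta by blast
  then have "(a, b) \<in> Poly_Mapping.keys (delta_mono m :: _ \<Rightarrow>\<^sub>0 'k)"
    by (auto simp: in_keys_iff)
  moreover have "m \<in> Amonos bin" "mdeg m = n" using m assms(1) by (auto simp: homog_def)
  ultimately show ?thesis
    using keys_delta[of _ bin a b] by (cases m) (auto simp: delta_mono_def mdeg_def split: if_splits)
qed

lemma mdeg_eq_0_iff: "m \<in> Amonos bin \<Longrightarrow> mdeg m = 0 \<longleftrightarrow> m = None"
  by (cases m) (auto simp: mdeg_def dest!: Amonos_reduced nleaves_pos)

lemma lookup_Delta_primitive:
  "primitive f \<Longrightarrow> a \<noteq> None \<Longrightarrow> b \<noteq> None \<Longrightarrow> Poly_Mapping.lookup (Delta f) (a, b) = 0"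
  by (auto simp: primitive_def lookup_add lookup_tensor lookup_single when_def)

lemma primitiveI:
  fixes f :: "'x mono \<Rightarrow>\<^sub>0 'k::comm_semiring_1"
  assumes "Poly_Mapping.keys f \<subseteq> Amonos bin" and "Poly_Mapping.lookup f None = 0"
    and "\<And>a b. a \<noteq> None \<Longrightarrow> b \<noteq> None \<Longrightarrow> Poly_Mapping.lookup (Delta f) (a, b) = 0"
  shows "primitive f"
  unfolding primitive_def
proof (rule poly_mapping_eqI, clarify)
  fix a b :: "'x mono"
  have counit_right: "Poly_Mapping.lookup (Delta f) (a, None) = Poly_Mapping.lookup f a" for a
    using assms(1) by (rule lookup_Delta_counit)
  then have counit_left: "Poly_Mapping.lookup (Delta f) (None, b) = Poly_Mapping.lookup f b" for b
    by (metis lookup_Delta_swap)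
  consider "b = None" | "a = None" | "a \<noteq> None" "b \<noteq> None" by blast
  then show "Poly_Mapping.lookup (Delta f) (a, b) = Poly_Mapping.lookup (tensor f one_el + tensor one_el f) (a, b)"
    using counit_left counit_right assms(2,3)
    by cases (auto simp: lookup_add lookup_tensor lookup_single when_def)
qed

lemma homog_keys_subset: "homog bin n f \<Longrightarrow> Poly_Mapping.keys f \<subseteq> Amonos bin"
  by (auto simp: homog_def)

lemma homog_None_notin_keys: "homog bin n f \<Longrightarrow> n \<noteq> 0 \<Longrightarrow> None \<notin> Poly_Mapping.keys f"
  by (auto simp: homog_def mdeg_def)

lemma pairing_shuffle_eq_0_if_primitive:
  assumes "Poly_Mapping.keys f \<subseteq> Amonos bin" and "primitive f"
    and "homog bin d1 g1" "homog bin d2 g2" "1 \<le> d1" "1 \<le> d2"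
  shows "pairing f (shuffle bin g1 g2) = 0"
proof -
  have "None \<notin> Poly_Mapping.keys g1" "None \<notin> Poly_Mapping.keys g2"
    using assms(3-6) by (auto dest: homog_None_notin_keys)
  then have "Poly_Mapping.lookup (Delta f) (p, q) = 0"
    if "p \<in> Poly_Mapping.keys g1" "q \<in> Poly_Mapping.keys g2" for p q
    using that by (metis lookup_Delta_primitive[OF assms(2)])
  then show ?thesis
    unfolding pairing_shuffle[OF assms(1)] by (simp add: sum.neutral)
qed

lemma dpartial_eq_0_iff_orthogonal_shuffles:
  fixes f :: "'x mono \<Rightarrow>\<^sub>0 'k::comm_semiring_1"
  assumes "homog bin n f"
  shows "dpartial S f = 0 \<longleftrightarrow>
    (\<forall>g. homog bin (n - mdeg S) g \<longrightarrow> pairing f (shuffle bin (Poly_Mapping.single S 1) g) = 0)"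
proof
  assume "dpartial S f = 0"
  then show "\<forall>g. homog bin (n - mdeg S) g \<longrightarrow> pairing f (shuffle bin (Poly_Mapping.single S 1) g) = 0"
    by (simp add: pairing_shuffle[OF homog_keys_subset[OF assms]] flip: lookup_dpartial)
next
  assume orth: "\<forall>g. homog bin (n - mdeg S) g \<longrightarrow> pairing f (shuffle bin (Poly_Mapping.single S 1) g) = 0"
  show "dpartial S f = 0"
  proof (rule poly_mapping_eqI, rule ccontr)
    fix U
    assume "Poly_Mapping.lookup (dpartial S f) U \<noteq> Poly_Mapping.lookup 0 U"
    then have U: "(S, U) \<in> Poly_Mapping.keys (Delta f)" by (simp add: lookup_dpartial in_keys_iff)
    then have "homog bin (n - mdeg S) (Poly_Mapping.single U (1::'k))"
      using keys_Delta_homog[OF assms] by (force simp: homog_def)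
    then have "pairing f (shuffle bin (Poly_Mapping.single S 1) (Poly_Mapping.single U 1)) = 0"
      using orth by blast
    then show False
      using U by (simp add: pairing_shuffle_single[OF homog_keys_subset[OF assms]] in_keys_iff)
  qed
qed

lemma primitive_if_orthogonal_low_shuffles:
  fixes f :: "'x mono \<Rightarrow>\<^sub>0 'k::comm_semiring_1"
  assumes f: "homog bin n f" "1 \<le> n"
    and orth: "\<And>S T. S \<in> Amonos bin \<Longrightarrow> T \<in> Amonos bin \<Longrightarrow> 1 \<le> mdeg S \<Longrightarrow> mdeg S + mdeg T = n \<Longrightarrow>
      2 * mdeg S < n + 1 \<Longrightarrow> pairing f (shuffle bin (Poly_Mapping.single S 1) (Poly_Mapping.single T 1)) = 0"
  shows "primitive f"
proof (rule primitiveI)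
  show keys: "Poly_Mapping.keys f \<subseteq> Amonos bin" using f(1) by (rule homog_keys_subset)
  show "Poly_Mapping.lookup f None = 0"
    using homog_None_notin_keys[OF f(1)] f(2) by (simp add: in_keys_iff)
  fix a b :: "'x mono"
  assume "a \<noteq> None" "b \<noteq> None"
  show "Poly_Mapping.lookup (Delta f) (a, b) = 0"
  proof (rule ccontr)
    assume "Poly_Mapping.lookup (Delta f) (a, b) \<noteq> 0"
    then have ab: "a \<in> Amonos bin" "b \<in> Amonos bin" "mdeg a + mdeg b = n"
      using keys_Delta_homog[OF f(1), of a b] by (auto simp: in_keys_iff)
    moreover have "1 \<le> mdeg a" "1 \<le> mdeg b"
      using ab \<open>a \<noteq> None\<close> \<open>b \<noteq> None\<close> mdeg_eq_0_iff by (auto simp: Suc_le_eq)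
    moreover have "2 * mdeg a < n + 1 \<or> 2 * mdeg b < n + 1"
      using ab(3) by linarith
    ultimately show False
      using orth[of a b] orth[of b a] \<open>Poly_Mapping.lookup (Delta f) (a, b) \<noteq> 0\<close> lookup_Delta_swap[of f a b]
      by (auto simp: pairing_shuffle_single[OF keys])
  qed
qed

theorem proposition4p7p1:
  fixes bin :: bool and n :: nat
    and f :: "('x::countable) mono \<Rightarrow>\<^sub>0 'k::field_char_0"
  assumes "1 \<le> n" and "homog bin n f"
  shows "(primitive f \<longrightarrow>
            (\<forall>g1 g2 d1 d2. 1 \<le> d1 \<longrightarrow> 1 \<le> d2 \<longrightarrow> homog bin d1 g1 \<longrightarrow> homog bin d2 g2 \<longrightarrow>
               pairing f (shuffle bin g1 g2) = 0))
       \<and> (\<forall>S k. S \<in> Amonos bin \<longrightarrow> mdeg S = k \<longrightarrow> 1 \<le> k \<longrightarrow> k \<le> n - 1 \<longrightarrow>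
            (dpartial S f = 0 \<longleftrightarrow>
              (\<forall>g. homog bin (n - k) g \<longrightarrow> pairing f (shuffle bin (Poly_Mapping.single S 1) g) = 0)))
       \<and> ((\<forall>S T k. S \<in> Amonos bin \<longrightarrow> T \<in> Amonos bin \<longrightarrow> mdeg S = k \<longrightarrow> mdeg T = n - k \<longrightarrow>
              1 \<le> k \<longrightarrow> 2 * k < n + 1 \<longrightarrow>
              pairing f (shuffle bin (Poly_Mapping.single S 1) (Poly_Mapping.single T 1)) = 0)
            \<longrightarrow> primitive f)"
proof -
  have keys: "Poly_Mapping.keys f \<subseteq> Amonos bin"
    using assms(2) by (rule homog_keys_subset)
  show ?thesis
  proof (intro conjI allI impI)
    show "pairing f (shuffle bin g1 g2) = 0"
      if "primitive f" "1 \<le> d1" "1 \<le> d2" "homog bin d1 g1" "homog bin d2 g2" for g1 g2 d1 d2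
      using pairing_shuffle_eq_0_if_primitive[OF keys] that by blast
    show "dpartial S f = 0 \<longleftrightarrow>
        (\<forall>g. homog bin (n - k) g \<longrightarrow> pairing f (shuffle bin (Poly_Mapping.single S 1) g) = 0)"
      if "mdeg S = k" for S k
      using dpartial_eq_0_iff_orthogonal_shuffles[OF assms(2)] that by blast
    show "primitive f"
      if "\<forall>S T k. S \<in> Amonos bin \<longrightarrow> T \<in> Amonos bin \<longrightarrow> mdeg S = k \<longrightarrow> mdeg T = n - k \<longrightarrow>
              1 \<le> k \<longrightarrow> 2 * k < n + 1 \<longrightarrow>
              pairing f (shuffle bin (Poly_Mapping.single S 1) (Poly_Mapping.single T 1)) = 0"
      using assms that by (intro primitive_if_orthogonal_low_shuffles) auto
  qed
qed

end
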